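(* Let $H$ be a traceless hermitian $4\times 4$ matrix with pairwise distinct eigenvalues $\lambda_1,\dots,\lambda_4$, let $C(z)=\prod_{k=1}^4(z-\lambda_k)$, and let $F_4(t)=\sum_{k=1}^4 \exp(i\lambda_k t)/C'(\lambda_k)$. Then for all real $t$, $$\exp(itH)=\left[H^3-iH^2\frac{d}{dt}-H\left(\tfrac12\operatorname{tr}(H^2)+\frac{d^2}{dt^2}\right)+I\left(-\tfrac13\operatorname{tr}(H^3)+\tfrac12 i\operatorname{tr}(H^2)\frac{d}{dt}+i\frac{d^3}{dt^3}\right)\right]F_4(t).$$
   Context: $I$ is the $4\times4$ identity matrix; a matrix coefficient multiplying a differential operator means the operator is applied to $F_4(t)$ and the result multiplies the matrix. *)

theory Defs
  imports "HOL-Analysis.Analysis" "HOL-Computational_Algebra.Polynomial"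
begin

definition mat_pow :: "'a::comm_ring_1^'n^'n \<Rightarrow> nat \<Rightarrow> 'a^'n^'n" where
  "mat_pow A n = ((\<lambda>M. M ** A) ^^ n) (mat 1)"

definition mat_exp :: "complex^'n^'n \<Rightarrow> complex^'n^'n" where
  "mat_exp A = (\<chi> i j. (\<Sum>n. (mat_pow A n) $ i $ j / of_nat (fact n)))"

definition scal_mat :: "'a::times \<Rightarrow> 'a^'n^'m \<Rightarrow> 'a^'n^'m" where
  "scal_mat c A = (\<chi> i j. c * A $ i $ j)"

definition hermitian :: "complex^'n^'n \<Rightarrow> bool" where
  "hermitian A \<longleftrightarrow> (\<forall>i j. A $ i $ j = cnj (A $ j $ i))"

definition eigenvalues :: "complex^'n^'n \<Rightarrow> complex set" where
  "eigenvalues A = {c. \<exists>v. v \<noteq> 0 \<and> A *v v = c *s v}"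

definition nth_deriv :: "nat \<Rightarrow> (real \<Rightarrow> complex) \<Rightarrow> real \<Rightarrow> complex" where
  "nth_deriv n f = ((\<lambda>g t. vector_derivative g (at t)) ^^ n) f"

end

theory Submission
  imports Defs
begin

text \<open>
  Distinct eigenvalues make \<open>H\<close> diagonalizable, \<open>H = V diag(\<lambda>) V\<^sup>-\<^sup>1\<close>; then both sides
  have the form \<open>V diag(f) V\<^sup>-\<^sup>1\<close> and it suffices to compare them at each eigenvalue \<open>\<lambda>\<^sub>m\<close>.
  With \<open>d\<^sub>k = C'(\<lambda>\<^sub>k) = \<Prod>\<^bsub>j\<noteq>k\<^esub> (\<lambda>\<^sub>k - \<lambda>\<^sub>j)\<close>, the n-th derivative of \<open>F\<^sub>4\<close> is
  \<open>\<Sum>\<^sub>k (i\<lambda>\<^sub>k)\<^sup>n exp(i\<lambda>\<^sub>k t) / d\<^sub>k\<close>, so at \<open>\<lambda>\<^sub>m\<close> the right-hand side is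
  \<open>\<Sum>\<^sub>k exp(i\<lambda>\<^sub>k t) / d\<^sub>k \<cdot> q\<^sub>k(\<lambda>\<^sub>m)\<close> for a cubic \<open>q\<^sub>k\<close>. As \<open>\<Sum> \<lambda>\<^sub>k = 0\<close>, Newton's identities
  express the elementary symmetric functions of the other three eigenvalues through \<open>\<lambda>\<^sub>k\<close>,
  \<open>tr H\<^sup>2\<close> and \<open>tr H\<^sup>3\<close>, which gives \<open>q\<^sub>k(x) = \<Prod>\<^bsub>j\<noteq>k\<^esub> (x - \<lambda>\<^sub>j)\<close>. This vanishes at \<open>\<lambda>\<^sub>m\<close> unless
  \<open>k = m\<close>, where it equals \<open>d\<^sub>m\<close>: the identity is Lagrange interpolation of \<open>x \<mapsto> exp(ixt)\<close> at the
  eigenvalues.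
\<close>

definition diag_mat :: "('n \<Rightarrow> 'a::zero) \<Rightarrow> 'a^'n^'n" where
  "diag_mat f = (\<chi> i j. if i = j then f i else 0)"

lemma matrix_mul_diag_mat_nth: "((V::'a::comm_ring_1^'n^'n) ** diag_mat f) $ i $ k = V$i$k * f k"
  unfolding diag_mat_def matrix_matrix_mult_def
  by (simp add: if_distrib[of "\<lambda>x. _ * x"] cong: if_cong)

lemma conj_diag_mat_nth:
  "((V::'a::comm_ring_1^'n^'n) ** diag_mat f ** W) $ i $ j = (\<Sum>k\<in>UNIV. V$i$k * f k * W$k$j)"
  by (simp add: matrix_matrix_mult_def[of "V ** diag_mat f"] matrix_mul_diag_mat_nth)

lemma diag_mat_mult: "diag_mat f ** diag_mat g = (diag_mat (\<lambda>k. f k * g k) :: 'a::comm_ring_1^'n^'n)"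
  by (simp add: vec_eq_iff matrix_mul_diag_mat_nth) (simp add: diag_mat_def)

lemma diag_mat_1: "diag_mat (\<lambda>k. 1) = (mat 1 :: 'a::comm_ring_1^'n^'n)"
  by (simp add: diag_mat_def mat_def vec_eq_iff)

subsection \<open>Functional calculus of a diagonalized matrix\<close>

lemma scal_mat_conj_diag:
  fixes V W :: "'a::comm_ring_1^'n^'n"
  shows "scal_mat c (V ** diag_mat f ** W) = V ** diag_mat (\<lambda>k. c * f k) ** W"
  by (simp add: vec_eq_iff scal_mat_def conj_diag_mat_nth sum_distrib_left algebra_simps)

lemma add_conj_diag:
  fixes V W :: "'a::comm_ring_1^'n^'n"
  shows "V ** diag_mat f ** W + V ** diag_mat g ** W = V ** diag_mat (\<lambda>k. f k + g k) ** W"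
  by (simp add: vec_eq_iff conj_diag_mat_nth sum.distrib[symmetric] algebra_simps)

lemma diff_conj_diag:
  fixes V W :: "'a::comm_ring_1^'n^'n"
  shows "V ** diag_mat f ** W - V ** diag_mat g ** W = V ** diag_mat (\<lambda>k. f k - g k) ** W"
  by (simp add: vec_eq_iff conj_diag_mat_nth sum_subtractf[symmetric] algebra_simps)

lemma mat_eq_conj_diag:
  fixes V W :: "'a::comm_ring_1^'n^'n"
  assumes "V ** W = mat 1"
  shows "mat c = V ** diag_mat (\<lambda>k. c) ** W"
proof -
  have "mat c = scal_mat c (mat 1 :: 'a^'n^'n)"
    by (simp add: vec_eq_iff scal_mat_def mat_def)
  also have "\<dots> = scal_mat c (V ** diag_mat (\<lambda>k. 1) ** W)"
    by (simp add: assms diag_mat_1)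
  finally show ?thesis by (simp add: scal_mat_conj_diag)
qed

lemma mat_pow_conj_diag:
  fixes V W :: "'a::comm_ring_1^'n^'n"
  assumes WV: "W ** V = mat 1" and VW: "V ** W = mat 1"
  shows "mat_pow (V ** diag_mat f ** W) n = V ** diag_mat (\<lambda>k. f k ^ n) ** W"
proof (induction n)
  case 0
  then show ?case by (simp add: mat_pow_def diag_mat_1 VW)
next
  case (Suc n)
  have "mat_pow (V ** diag_mat f ** W) (Suc n) = mat_pow (V ** diag_mat f ** W) n ** (V ** diag_mat f ** W)"
    by (simp add: mat_pow_def)
  also have "\<dots> = V ** (diag_mat (\<lambda>k. f k ^ n) ** (W ** V) ** diag_mat f) ** W"
    by (simp add: Suc matrix_mul_assoc)
  finally show ?case by (simp add: WV diag_mat_mult mult.commute)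
qed

lemma trace_conj_diag:
  fixes V W :: "'a::comm_ring_1^'n^'n"
  assumes "W ** V = mat 1"
  shows "trace (V ** diag_mat f ** W) = (\<Sum>k\<in>UNIV. f k)"
proof -
  have "trace (V ** diag_mat f ** W) = trace (W ** (V ** diag_mat f))"
    by (rule trace_mul_sym)
  also have "\<dots> = trace (diag_mat f)"
    by (simp add: matrix_mul_assoc assms)
  finally show ?thesis
    by (simp add: trace_def diag_mat_def)
qed

lemma mat_exp_conj_diag:
  fixes V W :: "complex^'n^'n"
  assumes WV: "W ** V = mat 1" and VW: "V ** W = mat 1"
  shows "mat_exp (V ** diag_mat f ** W) = V ** diag_mat (\<lambda>k. exp (f k)) ** W"
proof -
  have "(\<lambda>n. mat_pow (V ** diag_mat f ** W) n $ i $ j / of_nat (fact n)) sums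
        (\<Sum>k\<in>UNIV. V$i$k * exp (f k) * W$k$j)" for i j
  proof -
    have "(\<lambda>n. \<Sum>k\<in>UNIV. V$i$k * (f k ^ n /\<^sub>R fact n) * W$k$j) sums (\<Sum>k\<in>UNIV. V$i$k * exp (f k) * W$k$j)"
      by (intro sums_sum sums_mult sums_mult2 exp_converges)
    moreover have "(\<Sum>k\<in>UNIV. V$i$k * (f k ^ n /\<^sub>R fact n) * W$k$j)
        = mat_pow (V ** diag_mat f ** W) n $ i $ j / of_nat (fact n)" for n
      by (simp add: mat_pow_conj_diag[OF WV VW] conj_diag_mat_nth sum_divide_distrib
          scaleR_conv_of_real divide_inverse mult_ac sum_distrib_left)
    ultimately show ?thesis by simp
  qed
  then show ?thesis
    by (simp add: mat_exp_def vec_eq_iff conj_diag_mat_nth sums_unique[symmetric])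
qed

subsection \<open>Matrices with distinct eigenvalues are diagonalizable\<close>

lemma eigenvectors_independent:
  fixes H :: "'a::field^'n^'n"
  assumes ev: "\<And>k. H *v v k = lam k *s v k" and nz: "\<And>k. v k \<noteq> 0" and inj: "inj lam"
    and "finite S" and "(\<Sum>k\<in>S. c k *s v k) = 0" and "k \<in> S"
  shows "c k = 0"
  using assms(4-)
proof (induction S arbitrary: c k rule: finite_induct)
  case empty
  then show ?case by simp
next
  case (insert a S)
  have sum_eq_0: "c a *s v a + (\<Sum>k\<in>S. c k *s v k) = 0"
    using insert by simp
  have "H *v (c a *s v a + (\<Sum>k\<in>S. c k *s v k)) - lam a *s (c a *s v a + (\<Sum>k\<in>S. c k *s v k))
      = (\<Sum>k\<in>S. (c k * (lam k - lam a)) *s v k)"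
    by (simp add: vec.sum vec.scale ev vec.scale_sum_right algebra_simps sum_subtractf)
  then have "(\<Sum>k\<in>S. (c k * (lam k - lam a)) *s v k) = 0"
    by (simp add: sum_eq_0)
  then have "c k * (lam k - lam a) = 0" if "k \<in> S" for k
    using insert.IH[of "\<lambda>k. c k * (lam k - lam a)"] that by blast
  moreover have "lam k \<noteq> lam a" if "k \<in> S" for k
    using that insert.hyps(2) inj by (metis inj_eq)
  ultimately have "c k = 0" if "k \<in> S" for k
    using that by simp
  then have "c a = 0"
    using sum_eq_0 nz[of a] by simp
  then show ?case
    using insert.prems(2) \<open>\<And>k. k \<in> S \<Longrightarrow> c k = 0\<close> by auto
qed

lemma eigenbasis_diagonalizes:
  fixes H :: "'a::field^'n^'n" and v :: "'n \<Rightarrow> 'a^'n"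
  assumes ev: "\<And>k. H *v v k = lam k *s v k" and nz: "\<And>k. v k \<noteq> 0" and inj: "inj lam"
  obtains V W where "W ** V = mat 1" "V ** W = mat 1" "H = V ** diag_mat lam ** W"
proof -
  define V :: "'a^'n^'n" where "V = (\<chi> r k. v k $ r)"
  have "column k V = v k" for k
    by (simp add: column_def V_def vec_eq_iff)
  then obtain W where WV: "W ** V = mat 1"
    using matrix_left_invertible_independent_columns[of V]
      eigenvectors_independent[OF ev nz inj, of UNIV] by auto
  then have VW: "V ** W = mat 1"
    using matrix_left_right_inverse by blast
  have "(H *v v k) $ i = lam k * v k $ i" for i k
    using ev by simp
  then have "(H ** V) $ i $ k = (V ** diag_mat lam) $ i $ k" for i k
    unfolding matrix_mul_diag_mat_nth
    by (simp add: V_def matrix_matrix_mult_def matrix_vector_mult_def mult.commute)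
  then have "H ** V = V ** diag_mat lam"
    by (simp add: vec_eq_iff)
  then have "H = V ** diag_mat lam ** W"
    by (metis VW matrix_mul_assoc matrix_mul_rid)
  with WV VW that show ?thesis by blast
qed

lemma distinct_eigenvalues_diagonalizable:
  fixes H :: "complex^'n^'n" and lam :: "'n \<Rightarrow> complex"
  assumes "range lam \<subseteq> eigenvalues H" and "inj lam"
  obtains V W where "W ** V = mat 1" "V ** W = mat 1" "H = V ** diag_mat lam ** W"
proof -
  have "\<forall>k. \<exists>x. x \<noteq> 0 \<and> H *v x = lam k *s x"
    using assms(1) by (auto simp: eigenvalues_def)
  then obtain v where nz: "\<And>k. v k \<noteq> 0" and ev: "\<And>k. H *v v k = lam k *s v k"
    by metis
  show ?thesis
    by (rule eigenbasis_diagonalizes[OF ev nz assms(2)]) (rule that)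
qed

subsection \<open>The scalar function \<open>F\<^sub>4\<close>\<close>

lemma has_vector_derivative_exp_scaled:
  "((\<lambda>t. exp (c * complex_of_real t)) has_vector_derivative c * exp (c * complex_of_real t)) (at t)"
proof -
  have "((\<lambda>z. exp (c * z)) has_field_derivative c * exp (c * of_real t)) (at (of_real t))"
    by (auto intro!: derivative_eq_intros)
  from has_vector_derivative_real_field[OF this] show ?thesis .
qed

lemma nth_deriv_Suc: "nth_deriv (Suc n) f = (\<lambda>t. vector_derivative (nth_deriv n f) (at t))"
  by (simp add: nth_deriv_def)

lemma nth_deriv_sum_exp:
  "nth_deriv n (\<lambda>t. \<Sum>k\<in>S. a k * exp (c k * complex_of_real t))
   = (\<lambda>t. \<Sum>k\<in>S. a k * c k ^ n * exp (c k * complex_of_real t))"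
proof (induction n)
  case 0
  then show ?case by (simp add: nth_deriv_def)
next
  case (Suc n)
  have "((\<lambda>t. \<Sum>k\<in>S. a k * c k ^ n * exp (c k * complex_of_real t)) has_vector_derivative
      (\<Sum>k\<in>S. a k * c k ^ n * (c k * exp (c k * complex_of_real t)))) (at t)" for t
    by (intro has_vector_derivative_sum has_vector_derivative_mult_right has_vector_derivative_exp_scaled)
  then have "((\<lambda>t. \<Sum>k\<in>S. a k * c k ^ n * exp (c k * complex_of_real t)) has_vector_derivative
      (\<Sum>k\<in>S. a k * c k ^ Suc n * exp (c k * complex_of_real t))) (at t)" for t
    by (simp add: mult_ac)
  then show ?case
    unfolding nth_deriv_Suc Suc by (intro ext vector_derivative_at)
qed

lemma sum_prod_diff_others:
  fixes l :: "'n::finite \<Rightarrow> 'a::comm_ring_1"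
  shows "(\<Sum>k\<in>UNIV. a k * (\<Prod>j\<in>UNIV-{k}. l m - l j)) = a m * (\<Prod>j\<in>UNIV-{m}. l m - l j)"
proof -
  have "(\<Sum>k\<in>UNIV-{m}. a k * (\<Prod>j\<in>UNIV-{k}. l m - l j)) = 0"
  proof (rule sum.neutral, intro ballI)
    fix k assume "k \<in> UNIV - {m}"
    then have "(\<Prod>j\<in>UNIV-{k}. l m - l j) = 0"
      by (intro prod_zero bexI[of _ m]) auto
    then show "a k * (\<Prod>j\<in>UNIV-{k}. l m - l j) = 0"
      by simp
  qed
  then show ?thesis by (simp add: sum.remove[of UNIV m])
qed

lemma poly_pderiv_prod_linear:
  fixes l :: "'n::finite \<Rightarrow> 'a::idom"
  shows "poly (pderiv (\<Prod>k\<in>UNIV. [:- l k, 1:])) (l m) = (\<Prod>j\<in>UNIV-{m}. l m - l j)"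
  using sum_prod_diff_others[of "\<lambda>_. 1" l m]
  by (simp add: pderiv_prod poly_sum poly_prod pderiv_pCons)

lemma prod_others_traceless_quartic:
  fixes l :: "'n::finite \<Rightarrow> 'a::field_char_0"
  assumes "CARD('n) = 4" and "(\<Sum>j\<in>UNIV. l j) = 0"
  defines "p2 \<equiv> \<Sum>j\<in>UNIV. l j ^ 2" and "p3 \<equiv> \<Sum>j\<in>UNIV. l j ^ 3"
  shows "(\<Prod>j\<in>UNIV-{k}. x - l j)
      = x^3 + l k * x^2 + (l k^2 - p2/2) * x + (l k^3 - l k * p2/2 - p3/3)"
proof -
  have "card (UNIV - {k}) = 3"
    using assms(1) by simp
  then obtain b c e where others: "UNIV - {k} = {b, c, e}" "b \<noteq> c" "c \<noteq> e" "b \<noteq> e"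
    unfolding card_3_iff by blast
  then have univ: "UNIV = insert k {b, c, e}" and "k \<notin> {b, c, e}"
    by blast+
  have sum_univ: "(\<Sum>j\<in>UNIV. f j) = f k + f b + f c + f e" for f :: "'n \<Rightarrow> 'a"
    unfolding univ using others \<open>k \<notin> {b, c, e}\<close> by (simp add: add_ac)
  have "l k + l b + l c + l e = 0"
    using assms(2) sum_univ[of l] by simp
  then have l_e: "l e = - (l k + l b + l c)"
    by (metis add.commute eq_neg_iff_add_eq_0)
  have prod_others: "(\<Prod>j\<in>UNIV-{k}. x - l j) = (x - l b) * (x - l c) * (x - l e)"
    using others by (simp add: mult_ac)
  show ?thesis
    unfolding prod_others p2_def p3_def sum_univ l_e
    by (simp add: field_simps power2_eq_square power3_eq_cube)
qed

lemma traceless_quartic_exp_interpolation: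
  fixes l e :: "'n::finite \<Rightarrow> complex"
  assumes "CARD('n) = 4" and "inj l" and "(\<Sum>j\<in>UNIV. l j) = 0"
  defines "p2 \<equiv> \<Sum>j\<in>UNIV. l j ^ 2" and "p3 \<equiv> \<Sum>j\<in>UNIV. l j ^ 3"
  defines "D n \<equiv> \<Sum>k\<in>UNIV. e k / (\<Prod>j\<in>UNIV-{k}. l k - l j) * (\<i> * l k) ^ n"
  shows "D 0 * l m ^ 3 - \<i> * D 1 * l m ^ 2 - (p2 / 2 * D 0 + D 2) * l m
      + (- p3 / 3 * D 0 + \<i> / 2 * p2 * D 1 + \<i> * D 3) = e m"
proof -
  define d where "d k = (\<Prod>j\<in>UNIV-{k}. l k - l j)" for k
  have "D 0 * l m ^ 3 - \<i> * D 1 * l m ^ 2 - (p2 / 2 * D 0 + D 2) * l m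
      + (- p3 / 3 * D 0 + \<i> / 2 * p2 * D 1 + \<i> * D 3)
      = (\<Sum>k\<in>UNIV. e k / d k *
          (l m ^ 3 + l k * l m ^ 2 + (l k ^ 2 - p2/2) * l m + (l k ^ 3 - l k * p2/2 - p3/3)))"
    by (simp add: D_def d_def algebra_simps power2_eq_square power3_eq_cube sum.distrib
        sum_subtractf sum_distrib_left sum_distrib_right sum_divide_distrib sum_negf)
  also have "\<dots> = (\<Sum>k\<in>UNIV. e k / d k * (\<Prod>j\<in>UNIV-{k}. l m - l j))"
    using prod_others_traceless_quartic[OF assms(1,3)] by (simp add: p2_def p3_def)
  also have "\<dots> = e m / d m * d m"
    unfolding d_def by (rule sum_prod_diff_others)
  also have "\<dots> = e m"
    using assms(2) by (simp add: d_def inj_eq)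
  finally show ?thesis .
qed

theorem mainTheorem2:
  fixes H :: "complex^4^4" and lam :: "4 \<Rightarrow> complex"
  assumes "hermitian H"
    and "trace H = 0"
    and "eigenvalues H = range lam"
    and "inj lam"
  defines "C \<equiv> (\<Prod>k\<in>UNIV. [:- lam k, 1:])"
  defines "F4 \<equiv> (\<lambda>t::real. \<Sum>k\<in>UNIV. exp (\<i> * lam k * of_real t) / poly (pderiv C) (lam k))"
  shows "\<forall>t::real. mat_exp (scal_mat (\<i> * of_real t) H) =
      scal_mat (F4 t) (mat_pow H 3)
    - scal_mat (\<i> * nth_deriv 1 F4 t) (mat_pow H 2)
    - scal_mat (trace (mat_pow H 2) / 2 * F4 t + nth_deriv 2 F4 t) H
    + mat (- trace (mat_pow H 3) / 3 * F4 t + \<i> / 2 * trace (mat_pow H 2) * nth_deriv 1 F4 t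
           + \<i> * nth_deriv 3 F4 t)"
proof -
  obtain V W where WV: "W ** V = mat 1" and VW: "V ** W = mat 1" and H: "H = V ** diag_mat lam ** W"
    using distinct_eigenvalues_diagonalizable assms(3,4) by blast
  have traceless: "(\<Sum>k\<in>UNIV. lam k) = 0"
    using assms(2) by (simp add: H trace_conj_diag[OF WV])
  define D where "D t n = (\<Sum>k\<in>UNIV. exp (\<i> * of_real t * lam k)
      / (\<Prod>j\<in>UNIV-{k}. lam k - lam j) * (\<i> * lam k) ^ n)" for t n
  have F4_sum_exp: "F4 = (\<lambda>t. \<Sum>k\<in>UNIV. inverse (\<Prod>j\<in>UNIV-{k}. lam k - lam j) * exp (\<i> * lam k * of_real t))"
    by (simp add: F4_def C_def poly_pderiv_prod_linear divide_inverse mult.commute)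
  have deriv: "nth_deriv n F4 t = D t n" for n t
    unfolding F4_sum_exp nth_deriv_sum_exp D_def by (simp add: divide_inverse mult_ac)
  then have F4_eq: "F4 t = D t 0" for t
    by (metis funpow_0 nth_deriv_def)
  have eigenvalue_identity: "exp (\<i> * of_real t * lam m) = D t 0 * lam m ^ 3 - \<i> * D t 1 * lam m ^ 2
      - ((\<Sum>k\<in>UNIV. lam k ^ 2) / 2 * D t 0 + D t 2) * lam m
      + (- (\<Sum>k\<in>UNIV. lam k ^ 3) / 3 * D t 0 + \<i> / 2 * (\<Sum>k\<in>UNIV. lam k ^ 2) * D t 1 + \<i> * D t 3)"
    for t m
    by (rule traceless_quartic_exp_interpolation[OF _ assms(4) traceless,
          of "\<lambda>k. exp (\<i> * of_real t * lam k)", folded D_def, symmetric]) simp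
  show ?thesis
    unfolding F4_eq deriv
    by (simp only: H mat_pow_conj_diag[OF WV VW] scal_mat_conj_diag trace_conj_diag[OF WV]
        mat_eq_conj_diag[OF VW] diff_conj_diag add_conj_diag mat_exp_conj_diag[OF WV VW]
        eigenvalue_identity simp_thms)
qed

end
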